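(* Let $\bar{G}$ be a finite subgroup of $\mathrm{Aut}(\mathbb{P}^2)$ with $\bar{G}\cong\mathrm{S}_4$ or $\bar{G}\cong\mathrm{A}_4$. Then either there is a $\bar{G}$-invariant point in $\mathbb{P}^2$, or there is at most one $\bar{G}$-orbit in $\mathbb{P}^2$ of length $3$. *)

theory Defs
  imports "HOL-Analysis.Analysis" "HOL-Algebra.Sym_Groups"
begin

definition proj_class :: "complex^3 \<Rightarrow> (complex^3) set" where
  "proj_class v = {c *s v | c. c \<noteq> 0}"

definition P2 :: "(complex^3) set set" where
  "P2 = {proj_class v | v. v \<noteq> 0}"

text \<open>Aut(P^2) = PGL_3(C): classes of invertible 3x3 complex matrices
  modulo nonzero scalars, with multiplication induced by matrix product.\<close>

definition pgl_class :: "complex^3^3 \<Rightarrow> (complex^3^3) set" where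
  "pgl_class A = {mat c ** A | c. c \<noteq> 0}"

definition PGL3 :: "(complex^3^3) set monoid" where
  "PGL3 = \<lparr> carrier = {pgl_class A | A. invertible A},
            mult = (\<lambda>X Y. {A ** B | A B. A \<in> X \<and> B \<in> Y}),
            one = pgl_class (mat 1) \<rparr>"

definition pgl_act :: "(complex^3^3) set \<Rightarrow> (complex^3) set \<Rightarrow> (complex^3) set" where
  "pgl_act X p = {A *v v | A v. A \<in> X \<and> v \<in> p}"

definition pgl_orbit :: "(complex^3^3) set set \<Rightarrow> (complex^3) set \<Rightarrow> (complex^3) set set" where
  "pgl_orbit H p = {pgl_act X p | X. X \<in> H}"

end

theory Submission
  imports Defs
begin

text \<open>Both S4 and A4 contain the Klein four-group V = {1, a, b, ab}, and a, b are commutators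
  in A4. On an orbit of length 3 the group acts through S3, where commutators act as even
  permutations; an even involution of three points is trivial, so V fixes every orbit of
  length 3 pointwise. Lifting a and b to matrices A, B with A^2 = B^2 = 1, every point
  fixed by V is a common eigenline of A and B with eigenvalue pair in {1, -1}^2. Two distinct
  such points with the same pair span a plane on which A and B are scalar, and this forces one of
  A, B, AB to be scalar, i.e. trivial in PGL3. So V fixes at most 4 points, there are never two
  distinct orbits of length 3, and the second alternative of the theorem always holds.\<close>

section \<open>Scalar matrices and involutions\<close>

lemma mat_mult_entry: "(mat k ** A) $ i $ j = k * A $ i $ j"
  for A :: "'a::semiring_1^'m^'n"
  unfolding matrix_matrix_mult_def mat_def
  by (auto simp: if_distrib if_distribR sum.delta'[OF finite] cong: if_cong)

lemma matrix_mult_mat_entry: "(A ** mat k) $ i $ j = A $ i $ j * k"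
  for A :: "'a::semiring_1^'m^'n"
  unfolding matrix_matrix_mult_def mat_def
  by (auto simp: if_distrib if_distribR sum.delta[OF finite] cong: if_cong)

lemma mat_mult_commute: "mat k ** A = A ** mat k"
  for A :: "'a::comm_semiring_1^'n^'n"
  by (simp add: vec_eq_iff mat_mult_entry matrix_mult_mat_entry mult.commute)

lemma mat_mult_mat: "mat k ** mat l = (mat (k * l) :: 'a::semiring_1^'n^'n)"
  by (simp add: vec_eq_iff mat_mult_entry) (simp add: mat_def)

lemma mat_mult_mat_mult: "mat k ** (mat l ** A) = mat (k * l) ** A"
  for A :: "'a::semiring_1^'m^'n"
  by (simp add: matrix_mul_assoc mat_mult_mat)

lemma mat_mult_mult_mat_mult: "(mat k ** A) ** (mat l ** B) = mat (k * l) ** (A ** B)"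
  for A B :: "'a::comm_semiring_1^'n^'n"
  by (metis mat_mult_commute mat_mult_mat_mult matrix_mul_assoc)

lemma mat_mult_matrix_vector_mult: "(mat k ** A) *v v = k *s (A *v v)"
  for A :: "'a::comm_semiring_1^'m^'n"
  by (simp add: vec_eq_iff matrix_vector_mult_def mat_mult_entry sum_distrib_left mult.assoc)

lemma mat_matrix_vector_mult: "(mat k :: 'a::comm_semiring_1^'n^'n) *v v = k *s v"
  using mat_mult_matrix_vector_mult[of k "mat 1" v] by simp

lemma mat_eq_iff_eigen: "A = mat k \<longleftrightarrow> (\<forall>v. A *v v = k *s v)"
  for A :: "'a::comm_semiring_1^'n^'n"
  by (metis mat_matrix_vector_mult matrix_eq)

lemma invertible_mat_iff: "invertible (mat k :: 'a::field^'n^'n) \<longleftrightarrow> k \<noteq> 0"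
proof
  assume "invertible (mat k :: 'a^'n^'n)"
  then obtain B :: "'a^'n^'n" where "mat k ** B = mat 1" by (auto simp: invertible_def)
  then have "k * B $ i $ i = 1" for i
    using mat_mult_entry[of k B i i] by (simp add: mat_def)
  then show "k \<noteq> 0" by auto
next
  assume "k \<noteq> 0"
  then show "invertible (mat k :: 'a^'n^'n)"
    unfolding invertible_def by (intro exI[of _ "mat (inverse k)"]) (simp add: mat_mult_mat)
qed

lemma involution_invertible: "A ** A = mat 1 \<Longrightarrow> invertible A"
  unfolding invertible_def by blast

lemma involution_eigenvalue:
  fixes A :: "'a::field^'n^'n"
  assumes "A ** A = mat 1" "A *v v = s *s v" "v \<noteq> 0"
  shows "s = 1 \<or> s = -1"
proof -
  have "(s * s) *s v = A *v (A *v v)"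
    using assms(2) by (simp add: vector_scalar_commute vector_smult_assoc)
  also have "\<dots> = 1 *s v"
    using assms(1) by (simp add: matrix_vector_mul_assoc)
  finally have "s * s = 1"
    using assms(3) by (metis vector_mul_rcancel)
  then show ?thesis
    by (simp add: square_eq_1_iff)
qed

lemma involution_opposite_eigenvector:
  fixes A :: "'a::field^'n^'n"
  assumes "A ** A = mat 1" "s * s = 1" "A \<noteq> mat s"
  obtains x where "A *v x = (- s) *s x" "x \<noteq> 0"
proof -
  obtain y where y: "A *v y \<noteq> s *s y" using assms(3) mat_eq_iff_eigen by blast
  have "A *v (A *v y) = y" using assms(1) by (simp add: matrix_vector_mul_assoc)
  then have "A *v (A *v y - s *s y) = (- s) *s (A *v y - s *s y)"
    using assms(2)
    by (simp add: matrix_vector_mult_diff_distrib vector_scalar_commute vector_smult_assoc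
        vector_ssub_ldistrib vector_smult_lneg)
  moreover have "A *v y - s *s y \<noteq> 0" using y by simp
  ultimately show thesis by (rule that)
qed

lemma involutions_commute:
  assumes "A ** A = mat 1" "B ** B = mat 1" "(A ** B) ** (A ** B) = mat 1"
  shows "A ** B = B ** A"
  by (metis assms matrix_mul_assoc matrix_mul_lid matrix_mul_rid)

lemma involutions_commute_if_common_eigenvector:
  fixes A B :: "'a::field^'n^'n"
  assumes AA: "A ** A = mat 1" and BB: "B ** B = mat 1" and AB: "(A ** B) ** (A ** B) = mat c"
    and "u \<noteq> 0" "A *v u = s *s u" "B *v u = t *s u"
  shows "A ** B = B ** A"
proof -
  have "s * s = 1" using involution_eigenvalue[OF AA assms(5,4)] by auto
  have "t * t = 1" using involution_eigenvalue[OF BB assms(6,4)] by auto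
  have "c *s u = (A ** B) *v ((A ** B) *v u)"
    using AB by (simp add: matrix_vector_mul_assoc mat_matrix_vector_mult)
  also have "\<dots> = ((s * s) * (t * t)) *s u"
    using assms(5,6) by (simp flip: matrix_vector_mul_assoc
        add: vector_scalar_commute vector_smult_assoc algebra_simps)
  finally have "(A ** B) ** (A ** B) = mat 1"
    using AB \<open>u \<noteq> 0\<close> \<open>s * s = 1\<close> \<open>t * t = 1\<close> by (metis mult_1 vector_mul_rcancel)
  then show ?thesis by (rule involutions_commute[OF AA BB])
qed

lemma eigen_on_span:
  fixes M :: "'a::field^'n^'n"
  assumes "\<And>b. b \<in> S \<Longrightarrow> M *v b = k *s b" and "v \<in> vec.span S"
  shows "M *v v = k *s v"
  using vec.linear_eq_on[of "(*v) M" "(*v) (mat k)" v S] assms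
  by (simp add: mat_matrix_vector_mult)

lemma span_three_eq_UNIV:
  fixes u w x :: "'a::field^3"
  assumes "u \<noteq> 0" "w \<notin> vec.span {u}" "x \<notin> vec.span {w, u}"
  shows "vec.span {x, w, u} = UNIV"
proof -
  have "w \<noteq> u" "x \<noteq> u" "x \<noteq> w"
    using assms(2,3) vec.span_base[of _ "{u}"] vec.span_base[of _ "{w, u}"] by auto
  then have "card {x, w, u} = vec.dim (UNIV :: ('a^3) set)"
    by (simp add: vec.dim_UNIV card_cart_basis)
  moreover have "vec.independent {x, w, u}"
    using assms \<open>w \<noteq> u\<close> \<open>x \<noteq> u\<close> \<open>x \<noteq> w\<close> by (simp add: vec.independent_insert)
  ultimately show ?thesis
    using vec.card_eq_dim[of "{x, w, u}" UNIV] by auto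
qed

lemma smult_eq_neg_smult_iff: "s *s z = (- s) *s z \<longleftrightarrow> s = 0 \<or> z = 0"
  for s :: "'a::field_char_0" and z :: "'a^'n"
  by (simp only: vector_mul_rcancel) simp

lemma eigenplane_opposite_eigenline:
  fixes A :: "'a::field_char_0^3^3"
  assumes "u \<noteq> 0" "w \<notin> vec.span {u}" "A *v u = s *s u" "A *v w = s *s w"
    and Ax: "A *v x = (- s) *s x" and "x \<noteq> 0" "s \<noteq> 0"
  shows "vec.span {x, w, u} = UNIV"
    and "A *v y = (- s) *s y \<Longrightarrow> y \<in> vec.span {x}"
proof -
  have plane: "A *v v = s *s v" if "v \<in> vec.span {w, u}" for v
    using eigen_on_span[OF _ that] assms(3,4) by blast
  then have "x \<notin> vec.span {w, u}"
    using Ax \<open>x \<noteq> 0\<close> \<open>s \<noteq> 0\<close> smult_eq_neg_smult_iff by metis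
  then show span: "vec.span {x, w, u} = UNIV"
    using span_three_eq_UNIV assms(1,2) by blast
  assume Ay: "A *v y = (- s) *s y"
  obtain k where "y - k *s x \<in> vec.span {w, u}"
    using span vec.span_breakdown_eq[of y x "{w, u}"] by auto
  then have "A *v (y - k *s x) = s *s (y - k *s x)" by (rule plane)
  moreover have "A *v (y - k *s x) = (- s) *s (y - k *s x)"
    using Ay Ax by (simp add: matrix_vector_mult_diff_distrib vector_scalar_commute
        vector_smult_assoc vector_ssub_ldistrib mult.commute)
  ultimately have "y = k *s x" using \<open>s \<noteq> 0\<close> smult_eq_neg_smult_iff[of s "y - k *s x"] by simp
  then show "y \<in> vec.span {x}" by (auto simp: vec.span_singleton)
qed

text \<open>A and B commute, so B preserves the eigenline of A opposite to the plane and acts on it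
  either as on the plane (then B is scalar) or oppositely (then AB is scalar).\<close>

lemma involution_pair_scalar_if_common_eigenplane:
  fixes A B :: "'a::field_char_0^3^3"
  assumes AA: "A ** A = mat 1" and BB: "B ** B = mat 1" and AB: "(A ** B) ** (A ** B) = mat c"
    and "u \<noteq> 0" "w \<notin> vec.span {u}"
    and Au: "A *v u = s *s u" and Aw: "A *v w = s *s w"
    and Bu: "B *v u = t *s u" and Bw: "B *v w = t *s w"
  shows "\<exists>k. A = mat k \<or> B = mat k \<or> A ** B = mat k"
proof (cases "A = mat s")
  case False
  have s: "s * s = 1" and t: "t * t = 1"
    using involution_eigenvalue[OF AA Au \<open>u \<noteq> 0\<close>] involution_eigenvalue[OF BB Bu \<open>u \<noteq> 0\<close>]
    by auto
  have ABu: "(A ** B) *v u = (s * t) *s u" and ABw: "(A ** B) *v w = (s * t) *s w"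
    by (simp_all flip: matrix_vector_mul_assoc
        add: Au Aw Bu Bw vector_scalar_commute vector_smult_assoc mult.commute)
  have comm: "A ** B = B ** A"
    by (rule involutions_commute_if_common_eigenvector[OF AA BB AB \<open>u \<noteq> 0\<close> Au Bu])
  obtain x where Ax: "A *v x = (- s) *s x" and "x \<noteq> 0"
    using involution_opposite_eigenvector[OF AA s False] by blast
  have "s \<noteq> 0" using s by auto
  note eigenline =
    eigenplane_opposite_eigenline[OF \<open>u \<noteq> 0\<close> \<open>w \<notin> vec.span {u}\<close> Au Aw Ax \<open>x \<noteq> 0\<close> \<open>s \<noteq> 0\<close>]
  have "A *v (B *v x) = B *v (A *v x)"
    by (simp add: matrix_vector_mul_assoc comm)
  then have "A *v (B *v x) = (- s) *s (B *v x)"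
    by (simp only: Ax vector_scalar_commute)
  then obtain g where Bx: "B *v x = g *s x"
    using eigenline(2) by (auto simp: vec.span_singleton)
  then have "g * g = 1"
    using involution_eigenvalue[OF BB Bx \<open>x \<noteq> 0\<close>] by auto
  then have "g = t \<or> g = - t" using t by (metis minus_equation_iff square_eq_1_iff)
  then show ?thesis
  proof
    assume "g = t"
    have "B *v v = t *s v" if "v \<in> vec.span {x, w, u}" for v
      using eigen_on_span[OF _ that] Bx Bu Bw \<open>g = t\<close> by blast
    then show ?thesis using eigenline(1) mat_eq_iff_eigen by blast
  next
    assume "g = - t"
    then have "(A ** B) *v x = (s * t) *s x"
      unfolding matrix_vector_mul_assoc[symmetric] Bx vector_scalar_commute Ax
      by (simp add: vector_smult_assoc mult.commute)
    then have "(A ** B) *v v = (s * t) *s v" if "v \<in> vec.span {x, w, u}" for v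
      using eigen_on_span[OF _ that] ABu ABw by blast
    then show ?thesis using eigenline(1) mat_eq_iff_eigen by blast
  qed
qed blast

section \<open>The projective linear group and its action on the plane\<close>

lemma pgl_class_iff: "B \<in> pgl_class A \<longleftrightarrow> (\<exists>c. c \<noteq> 0 \<and> B = mat c ** A)"
  unfolding pgl_class_def by blast

lemma pgl_class_self: "A \<in> pgl_class A"
  unfolding pgl_class_iff by (intro exI[of _ 1]) simp

lemma pgl_class_mat_mult:
  assumes "c \<noteq> 0"
  shows "pgl_class (mat c ** A) = pgl_class A"
proof (rule Set.set_eqI, intro iffI)
  fix B assume "B \<in> pgl_class (mat c ** A)"
  then obtain d where "d \<noteq> 0" "B = mat (d * c) ** A"
    by (auto simp: pgl_class_iff mat_mult_mat_mult)
  then show "B \<in> pgl_class A"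
    using assms unfolding pgl_class_iff by (intro exI[of _ "d * c"]) simp
next
  fix B assume "B \<in> pgl_class A"
  then obtain d where "d \<noteq> 0" "B = mat d ** A"
    by (auto simp: pgl_class_iff)
  then show "B \<in> pgl_class (mat c ** A)"
    using assms unfolding pgl_class_iff mat_mult_mat_mult by (intro exI[of _ "d / c"]) simp
qed

lemma pgl_class_eq_iff: "pgl_class A = pgl_class B \<longleftrightarrow> (\<exists>c. c \<noteq> 0 \<and> A = mat c ** B)"
  by (metis pgl_class_iff pgl_class_mat_mult pgl_class_self)

lemma PGL3_carrier: "carrier PGL3 = {pgl_class A | A. invertible A}"
  and PGL3_one: "\<one>\<^bsub>PGL3\<^esub> = pgl_class (mat 1)"
  and PGL3_mult: "X \<otimes>\<^bsub>PGL3\<^esub> Y = {A ** B | A B. A \<in> X \<and> B \<in> Y}"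
  unfolding PGL3_def by simp_all

lemma PGL3_carrierI: "invertible A \<Longrightarrow> pgl_class A \<in> carrier PGL3"
  unfolding PGL3_carrier by blast

lemma PGL3_carrierE:
  assumes "X \<in> carrier PGL3"
  obtains A where "X = pgl_class A" "invertible A"
  using assms unfolding PGL3_carrier by blast

lemma PGL3_mult_class: "pgl_class A \<otimes>\<^bsub>PGL3\<^esub> pgl_class B = pgl_class (A ** B)"
proof (rule Set.set_eqI, intro iffI)
  fix M assume "M \<in> pgl_class A \<otimes>\<^bsub>PGL3\<^esub> pgl_class B"
  then obtain A' B' where "A' \<in> pgl_class A" "B' \<in> pgl_class B" "M = A' ** B'"
    unfolding PGL3_mult by blast
  then obtain c d where "c \<noteq> 0" "d \<noteq> 0" "M = (mat c ** A) ** (mat d ** B)"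
    unfolding pgl_class_iff by auto
  then show "M \<in> pgl_class (A ** B)"
    unfolding pgl_class_iff mat_mult_mult_mat_mult by (intro exI[of _ "c * d"]) simp
next
  fix M assume "M \<in> pgl_class (A ** B)"
  then obtain c where "c \<noteq> 0" "M = (mat c ** A) ** B"
    by (auto simp: pgl_class_iff matrix_mul_assoc)
  then show "M \<in> pgl_class A \<otimes>\<^bsub>PGL3\<^esub> pgl_class B"
    unfolding PGL3_mult using pgl_class_self[of B] by (auto simp: pgl_class_iff)
qed

lemma group_PGL3: "group PGL3"
proof (rule groupI)
  show "\<one>\<^bsub>PGL3\<^esub> \<in> carrier PGL3"
    unfolding PGL3_one by (rule PGL3_carrierI) (simp add: invertible_def)
next
  fix X Y assume "X \<in> carrier PGL3" "Y \<in> carrier PGL3"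
  then show "X \<otimes>\<^bsub>PGL3\<^esub> Y \<in> carrier PGL3"
    by (elim PGL3_carrierE) (simp add: PGL3_mult_class PGL3_carrierI invertible_mult)
next
  fix X Y Z assume "X \<in> carrier PGL3" "Y \<in> carrier PGL3" "Z \<in> carrier PGL3"
  then show "X \<otimes>\<^bsub>PGL3\<^esub> Y \<otimes>\<^bsub>PGL3\<^esub> Z = X \<otimes>\<^bsub>PGL3\<^esub> (Y \<otimes>\<^bsub>PGL3\<^esub> Z)"
    by (elim PGL3_carrierE) (simp add: PGL3_mult_class matrix_mul_assoc)
next
  fix X assume "X \<in> carrier PGL3"
  then show "\<one>\<^bsub>PGL3\<^esub> \<otimes>\<^bsub>PGL3\<^esub> X = X"
    by (elim PGL3_carrierE) (simp add: PGL3_mult_class PGL3_one)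
next
  fix X assume "X \<in> carrier PGL3"
  then obtain A where X: "X = pgl_class A" and "invertible A" by (rule PGL3_carrierE)
  then obtain A' where "A' ** A = mat 1" "A ** A' = mat 1" unfolding invertible_def by blast
  then show "\<exists>Y\<in>carrier PGL3. Y \<otimes>\<^bsub>PGL3\<^esub> X = \<one>\<^bsub>PGL3\<^esub>"
    unfolding X by (intro bexI[of _ "pgl_class A'"] PGL3_carrierI)
      (auto simp: PGL3_mult_class PGL3_one invertible_def)
qed

lemma pgl_class_eq_one_iff: "pgl_class A = \<one>\<^bsub>PGL3\<^esub> \<longleftrightarrow> (\<exists>c. c \<noteq> 0 \<and> A = mat c)"
  by (simp add: PGL3_one pgl_class_eq_iff mat_mult_mat)

lemma PGL3_involution_lift:
  assumes "X \<in> carrier PGL3" and "X \<otimes>\<^bsub>PGL3\<^esub> X = \<one>\<^bsub>PGL3\<^esub>"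
  obtains A where "X = pgl_class A" and "A ** A = mat 1"
proof -
  obtain A0 where X: "X = pgl_class A0" using assms(1) by (rule PGL3_carrierE)
  then obtain c where "c \<noteq> 0" and A0: "A0 ** A0 = mat c"
    using assms(2) by (auto simp: PGL3_mult_class pgl_class_eq_one_iff)
  define d where "d = csqrt c"
  have "d * d = c" "d \<noteq> 0"
    using \<open>c \<noteq> 0\<close> unfolding d_def by (auto simp flip: power2_eq_square)
  have "(mat (1/d) ** A0) ** (mat (1/d) ** A0) = mat (1/d * (1/d)) ** (A0 ** A0)"
    by (rule mat_mult_mult_mat_mult)
  also have "\<dots> = mat 1"
    using \<open>d * d = c\<close> \<open>c \<noteq> 0\<close> by (simp add: A0 mat_mult_mat field_simps)
  finally show thesis
    using that[of "mat (1/d) ** A0"] \<open>d \<noteq> 0\<close> X by (simp add: pgl_class_mat_mult)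
qed

lemma proj_class_iff: "w \<in> proj_class v \<longleftrightarrow> (\<exists>c. c \<noteq> 0 \<and> w = c *s v)"
  unfolding proj_class_def by blast

lemma proj_class_self: "v \<in> proj_class v"
  unfolding proj_class_iff by (intro exI[of _ 1]) simp

lemma proj_class_smult: "c \<noteq> 0 \<Longrightarrow> proj_class (c *s v) = proj_class v"
  unfolding proj_class_def
  by (metis (no_types, opaque_lifting) divide_eq_0_iff nonzero_eq_divide_eq vector_smult_assoc)

lemma proj_class_not_in_span:
  assumes "proj_class u \<noteq> proj_class w" "w \<noteq> 0"
  shows "w \<notin> vec.span {u}"
proof
  assume "w \<in> vec.span {u}"
  then obtain k where "w = k *s u" by (auto simp: vec.span_singleton)
  then show False using assms by (auto simp: proj_class_smult)
qed

lemma P2I: "v \<noteq> 0 \<Longrightarrow> proj_class v \<in> P2"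
  unfolding P2_def by blast

lemma P2E:
  assumes "p \<in> P2"
  obtains v where "p = proj_class v" "v \<noteq> 0"
  using assms unfolding P2_def by blast

lemma pgl_act_class: "pgl_act (pgl_class A) (proj_class v) = proj_class (A *v v)"
proof (rule Set.set_eqI, intro iffI)
  fix w assume "w \<in> pgl_act (pgl_class A) (proj_class v)"
  then obtain B u where "B \<in> pgl_class A" "u \<in> proj_class v" "w = B *v u"
    unfolding pgl_act_def by blast
  then obtain c d where "c \<noteq> 0" "d \<noteq> 0" "w = (c * d) *s (A *v v)"
    unfolding pgl_class_iff proj_class_iff
    by (auto simp: mat_mult_matrix_vector_mult vector_scalar_commute)
  then show "w \<in> proj_class (A *v v)"
    unfolding proj_class_iff by (intro exI[of _ "c * d"]) simp
next
  fix w assume "w \<in> proj_class (A *v v)"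
  then obtain c where "c \<noteq> 0" "w = (mat c ** A) *v v"
    unfolding proj_class_iff by (auto simp: mat_mult_matrix_vector_mult)
  then show "w \<in> pgl_act (pgl_class A) (proj_class v)"
    unfolding pgl_act_def using proj_class_self[of v] by (auto simp: pgl_class_iff)
qed

lemma pgl_act_in_P2:
  assumes "X \<in> carrier PGL3" "p \<in> P2"
  shows "pgl_act X p \<in> P2"
proof -
  obtain A v where "X = pgl_class A" "invertible A" "p = proj_class v" "v \<noteq> 0"
    using assms by (elim PGL3_carrierE P2E)
  moreover have "A *v v \<noteq> 0"
    using inj_matrix_vector_mult[OF \<open>invertible A\<close>] \<open>v \<noteq> 0\<close>
    by (metis injD matrix_vector_mult_0_right)
  ultimately show ?thesis by (simp add: pgl_act_class P2I)
qed

lemma pgl_act_mult: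
  "X \<in> carrier PGL3 \<Longrightarrow> Y \<in> carrier PGL3 \<Longrightarrow> p \<in> P2 \<Longrightarrow>
    pgl_act (X \<otimes>\<^bsub>PGL3\<^esub> Y) p = pgl_act X (pgl_act Y p)"
  by (elim PGL3_carrierE P2E) (simp add: pgl_act_class PGL3_mult_class matrix_vector_mul_assoc)

lemma pgl_act_one: "p \<in> P2 \<Longrightarrow> pgl_act \<one>\<^bsub>PGL3\<^esub> p = p"
  by (elim P2E) (simp add: pgl_act_class PGL3_one)

lemma pgl_act_inv:
  assumes "X \<in> carrier PGL3" "p \<in> P2"
  shows "pgl_act (inv\<^bsub>PGL3\<^esub> X) (pgl_act X p) = p"
  using assms pgl_act_mult[of "inv\<^bsub>PGL3\<^esub> X" X p]
  by (simp add: group.l_inv[OF group_PGL3] group.inv_closed[OF group_PGL3] pgl_act_one)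

section \<open>Common fixed points of a Klein four-group\<close>

text \<open>A junk value unless the line p is an eigenline of M.\<close>

definition point_eigenvalue :: "complex^3^3 \<Rightarrow> (complex^3) set \<Rightarrow> complex"
  where "point_eigenvalue M p = (SOME l. \<forall>v\<in>p. M *v v = l *s v)"

lemma fixed_point_eigenvector:
  assumes "pgl_act (pgl_class M) (proj_class v) = proj_class v"
  shows "M *v v = point_eigenvalue M (proj_class v) *s v"
proof -
  have "M *v v \<in> proj_class v"
    using assms proj_class_self[of "M *v v"] by (simp add: pgl_act_class)
  then obtain l where "M *v v = l *s v" by (auto simp: proj_class_iff)
  then have "\<forall>v'\<in>proj_class v. M *v v' = l *s v'"
    by (auto simp: proj_class_iff vector_scalar_commute vector_smult_assoc mult.commute)
  then have "\<forall>v'\<in>proj_class v. M *v v' = point_eigenvalue M (proj_class v) *s v'"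
    unfolding point_eigenvalue_def by (rule someI)
  then show ?thesis using proj_class_self by blast
qed

definition klein_four_generators :: "(complex^3^3) set \<Rightarrow> (complex^3^3) set \<Rightarrow> bool"
  where "klein_four_generators X Y \<longleftrightarrow> X \<in> carrier PGL3 \<and> Y \<in> carrier PGL3
    \<and> X \<otimes>\<^bsub>PGL3\<^esub> X = \<one>\<^bsub>PGL3\<^esub> \<and> Y \<otimes>\<^bsub>PGL3\<^esub> Y = \<one>\<^bsub>PGL3\<^esub>
    \<and> (X \<otimes>\<^bsub>PGL3\<^esub> Y) \<otimes>\<^bsub>PGL3\<^esub> (X \<otimes>\<^bsub>PGL3\<^esub> Y) = \<one>\<^bsub>PGL3\<^esub>
    \<and> X \<noteq> \<one>\<^bsub>PGL3\<^esub> \<and> Y \<noteq> \<one>\<^bsub>PGL3\<^esub> \<and> X \<otimes>\<^bsub>PGL3\<^esub> Y \<noteq> \<one>\<^bsub>PGL3\<^esub>"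

lemma klein_four_generators_lift:
  assumes "klein_four_generators X Y"
  obtains A B c where "X = pgl_class A" "Y = pgl_class B"
    and "A ** A = mat 1" "B ** B = mat 1" "(A ** B) ** (A ** B) = mat c"
    and "\<nexists>k. A = mat k \<or> B = mat k \<or> A ** B = mat k"
proof -
  note gens = assms[unfolded klein_four_generators_def]
  obtain A where X: "X = pgl_class A" and AA: "A ** A = mat 1"
    using PGL3_involution_lift gens by blast
  obtain B where Y: "Y = pgl_class B" and BB: "B ** B = mat 1"
    using PGL3_involution_lift gens by blast
  obtain c where "(A ** B) ** (A ** B) = mat c"
    using gens by (auto simp: X Y PGL3_mult_class pgl_class_eq_one_iff)
  moreover have "\<nexists>k. A = mat k \<or> B = mat k \<or> A ** B = mat k"
  proof -
    have "M \<noteq> mat k" if "invertible M" "pgl_class M \<noteq> \<one>\<^bsub>PGL3\<^esub>" for M k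
      using that invertible_mat_iff pgl_class_eq_one_iff by blast
    moreover have "invertible A" "invertible B" "invertible (A ** B)"
      using AA BB by (simp_all add: involution_invertible invertible_mult)
    moreover have "pgl_class A \<noteq> \<one>\<^bsub>PGL3\<^esub>" "pgl_class B \<noteq> \<one>\<^bsub>PGL3\<^esub>"
      "pgl_class (A ** B) \<noteq> \<one>\<^bsub>PGL3\<^esub>"
      using gens unfolding X Y by (simp_all add: PGL3_mult_class)
    ultimately show ?thesis by blast
  qed
  ultimately show thesis using that X Y AA BB by blast
qed

text \<open>Points fixed by X and Y are common eigenlines of lifts A and B; two distinct ones with the
  same pair of eigenvalues would span a common eigenplane.\<close>

lemma card_fixed_points_klein_four_le_4:
  assumes "klein_four_generators X Y" and "S \<subseteq> P2"
    and fixed: "\<And>p. p \<in> S \<Longrightarrow> pgl_act X p = p \<and> pgl_act Y p = p"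
  shows "card S \<le> 4"
proof -
  obtain A B c where X: "X = pgl_class A" and Y: "Y = pgl_class B"
    and AA: "A ** A = mat 1" and BB: "B ** B = mat 1" and AB: "(A ** B) ** (A ** B) = mat c"
    and not_scalar: "\<nexists>k. A = mat k \<or> B = mat k \<or> A ** B = mat k"
    using klein_four_generators_lift[OF assms(1)] by blast
  define f where "f p = (point_eigenvalue A p, point_eigenvalue B p)" for p
  have eigen: "A *v v = point_eigenvalue A p *s v \<and> B *v v = point_eigenvalue B p *s v"
    if "p \<in> S" "p = proj_class v" for p v
    using fixed[OF that(1)] fixed_point_eigenvector unfolding X Y that(2) by blast
  have "f ` S \<subseteq> {1, -1} \<times> {1, -1}"
  proof
    fix z assume "z \<in> f ` S"
    then obtain p where "p \<in> S" "z = f p" by blast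
    moreover obtain v where "p = proj_class v" "v \<noteq> 0" using \<open>p \<in> S\<close> assms(2) P2E by blast
    ultimately show "z \<in> {1, -1} \<times> {1, -1}"
      using eigen involution_eigenvalue[OF AA] involution_eigenvalue[OF BB] unfolding f_def by blast
  qed
  moreover have "inj_on f S"
  proof (rule inj_onI, rule ccontr)
    fix p q assume "p \<in> S" "q \<in> S" "f p = f q" "p \<noteq> q"
    obtain u w where p: "p = proj_class u" "u \<noteq> 0" and q: "q = proj_class w" "w \<noteq> 0"
      using \<open>p \<in> S\<close> \<open>q \<in> S\<close> assms(2) P2E by (metis subsetD)
    have "A *v u = point_eigenvalue A p *s u" "A *v w = point_eigenvalue A p *s w"
      "B *v u = point_eigenvalue B p *s u" "B *v w = point_eigenvalue B p *s w"
      using eigen[OF \<open>p \<in> S\<close> p(1)] eigen[OF \<open>q \<in> S\<close> q(1)] \<open>f p = f q\<close>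
      unfolding f_def by auto
    moreover have "w \<notin> vec.span {u}"
      using proj_class_not_in_span \<open>p \<noteq> q\<close> p q by blast
    ultimately show False
      using involution_pair_scalar_if_common_eigenplane[OF AA BB AB \<open>u \<noteq> 0\<close>] not_scalar by blast
  qed
  ultimately show ?thesis
    using card_inj_on_le[of f S "{1, -1} \<times> {1, -1 :: complex}"] by (simp add: card_cartesian_product)
qed

section \<open>Orbits of length three\<close>

lemma even_involution_eq_id:
  assumes "finite S" "card S \<le> 3" "p permutes S" "p \<circ> p = id" "evenperm p"
  shows "p = id"
proof (rule ccontr)
  assume "p \<noteq> id"
  then obtain x where "p x \<noteq> x" by (auto simp: fun_eq_iff)
  define y where "y = p x"
  have "p y = x" using assms(4) unfolding y_def by (metis comp_apply id_apply)
  have "inj p" using assms(3) by (rule permutes_inj)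
  have in_S: "p u \<noteq> u \<Longrightarrow> u \<in> S \<and> p u \<in> S" for u
    using assms(3) by (metis permutes_not_in permutes_in_image)
  have "p = Transposition.transpose x y"
  proof
    fix z show "p z = Transposition.transpose x y z"
    proof (rule ccontr)
      assume "p z \<noteq> Transposition.transpose x y z"
      then have "z \<noteq> x" "z \<noteq> y" "p z \<noteq> z"
        using \<open>p y = x\<close> y_def by (auto simp: Transposition.transpose_def split: if_splits)
      moreover have "p z \<noteq> x" "p z \<noteq> y"
        using \<open>inj p\<close> \<open>p y = x\<close> y_def \<open>z \<noteq> x\<close> \<open>z \<noteq> y\<close> by (metis inj_eq)+
      ultimately have "card {x, y, z, p z} = 4" using \<open>p x \<noteq> x\<close> y_def by simp
      moreover have "{x, y, z, p z} \<subseteq> S"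
        using in_S \<open>p x \<noteq> x\<close> \<open>p z \<noteq> z\<close> y_def by simp
      ultimately show False
        using card_mono[OF assms(1), of "{x, y, z, p z}"] assms(2) by simp
    qed
  qed
  then have "evenperm (Transposition.transpose x y)" using assms(5) by simp
  moreover have "x \<noteq> y" using \<open>p x \<noteq> x\<close> y_def by simp
  ultimately show False by (simp add: evenperm_swap)
qed

lemma pgl_orbit_iff: "q \<in> pgl_orbit H p \<longleftrightarrow> (\<exists>X\<in>H. q = pgl_act X p)"
  unfolding pgl_orbit_def by blast

definition orbit_perm :: "(complex^3) set set \<Rightarrow> (complex^3^3) set \<Rightarrow> (complex^3) set \<Rightarrow> (complex^3) set"
  where "orbit_perm Q X q = (if q \<in> Q then pgl_act X q else q)"

context
  fixes H assumes subgroup_H: "subgroup H PGL3"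
begin

lemma pgl_orbit_subset_P2: "p \<in> P2 \<Longrightarrow> pgl_orbit H p \<subseteq> P2"
  unfolding pgl_orbit_def using pgl_act_in_P2 subgroup.mem_carrier[OF subgroup_H] by blast

lemma pgl_act_in_pgl_orbit:
  assumes "p \<in> P2" "X \<in> H" "q \<in> pgl_orbit H p"
  shows "pgl_act X q \<in> pgl_orbit H p"
proof -
  obtain Y where "Y \<in> H" "q = pgl_act Y p" using assms(3) unfolding pgl_orbit_iff by blast
  then have "pgl_act X q = pgl_act (X \<otimes>\<^bsub>PGL3\<^esub> Y) p"
    using assms(1,2) subgroup.mem_carrier[OF subgroup_H] by (simp add: pgl_act_mult)
  then show ?thesis
    unfolding pgl_orbit_iff using subgroup.m_closed[OF subgroup_H] assms(2) \<open>Y \<in> H\<close> by blast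
qed

lemma pgl_orbit_eq:
  assumes "p \<in> P2" "q \<in> pgl_orbit H p"
  shows "pgl_orbit H q = pgl_orbit H p"
proof
  have "q \<in> P2" using assms pgl_orbit_subset_P2 by blast
  have sub: "pgl_orbit H q \<subseteq> pgl_orbit H p" if "p \<in> P2" "q \<in> pgl_orbit H p" for p q
  proof
    fix r assume "r \<in> pgl_orbit H q"
    then obtain Y where "Y \<in> H" "r = pgl_act Y q" unfolding pgl_orbit_iff by blast
    then show "r \<in> pgl_orbit H p" using that pgl_act_in_pgl_orbit by blast
  qed
  obtain X where "X \<in> H" "q = pgl_act X p" using assms(2) unfolding pgl_orbit_iff by blast
  then have "p = pgl_act (inv\<^bsub>PGL3\<^esub> X) q"
    using assms(1) subgroup.mem_carrier[OF subgroup_H] by (simp add: pgl_act_inv)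
  then have "p \<in> pgl_orbit H q"
    unfolding pgl_orbit_iff using subgroup.m_inv_closed[OF subgroup_H] \<open>X \<in> H\<close> by blast
  show "pgl_orbit H q \<subseteq> pgl_orbit H p" using sub assms by blast
  show "pgl_orbit H p \<subseteq> pgl_orbit H q" using sub \<open>q \<in> P2\<close> \<open>p \<in> pgl_orbit H q\<close> by blast
qed

lemma pgl_orbits_disjoint:
  "p \<in> P2 \<Longrightarrow> q \<in> P2 \<Longrightarrow> pgl_orbit H p \<noteq> pgl_orbit H q \<Longrightarrow> pgl_orbit H p \<inter> pgl_orbit H q = {}"
  using pgl_orbit_eq by blast

lemma orbit_perm_mult:
  assumes "p \<in> P2" "X \<in> H" "Y \<in> H"
  shows "orbit_perm (pgl_orbit H p) (X \<otimes>\<^bsub>PGL3\<^esub> Y)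
    = orbit_perm (pgl_orbit H p) X \<circ> orbit_perm (pgl_orbit H p) Y"
proof
  fix q
  have "q \<in> pgl_orbit H p \<Longrightarrow> q \<in> P2" using assms(1) pgl_orbit_subset_P2 by blast
  then show "orbit_perm (pgl_orbit H p) (X \<otimes>\<^bsub>PGL3\<^esub> Y) q
      = (orbit_perm (pgl_orbit H p) X \<circ> orbit_perm (pgl_orbit H p) Y) q"
    using assms pgl_act_in_pgl_orbit subgroup.mem_carrier[OF subgroup_H]
    by (auto simp: orbit_perm_def pgl_act_mult)
qed

lemma orbit_perm_one: "p \<in> P2 \<Longrightarrow> orbit_perm (pgl_orbit H p) \<one>\<^bsub>PGL3\<^esub> = id"
  using pgl_orbit_subset_P2[of p] by (auto simp: orbit_perm_def pgl_act_one fun_eq_iff)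

lemma orbit_perm_inv:
  assumes "p \<in> P2" "X \<in> H"
  shows "orbit_perm (pgl_orbit H p) (inv\<^bsub>PGL3\<^esub> X) = inv' (orbit_perm (pgl_orbit H p) X)"
proof -
  have "X \<in> carrier PGL3" using assms(2) subgroup.mem_carrier[OF subgroup_H] by blast
  then show ?thesis
    using assms subgroup.m_inv_closed[OF subgroup_H]
    by (intro inv_unique_comp[symmetric])
      (simp_all flip: orbit_perm_mult add: orbit_perm_one group.l_inv group.r_inv group_PGL3)
qed

lemma orbit_perm_permutes:
  assumes "p \<in> P2" "X \<in> H"
  shows "orbit_perm (pgl_orbit H p) X permutes pgl_orbit H p"
proof -
  have "bij (orbit_perm (pgl_orbit H p) X)"
    using assms subgroup.m_inv_closed[OF subgroup_H] subgroup.mem_carrier[OF subgroup_H]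
    by (intro o_bij[of "orbit_perm (pgl_orbit H p) (inv\<^bsub>PGL3\<^esub> X)"])
      (simp_all flip: orbit_perm_mult add: orbit_perm_one group.l_inv group.r_inv group_PGL3)
  then show ?thesis
    unfolding permutes_def bij_iff by (simp add: orbit_perm_def)
qed

lemma evenperm_orbit_perm_commutator:
  assumes "p \<in> P2" "finite (pgl_orbit H p)" "X \<in> H" "Y \<in> H"
  shows "evenperm (orbit_perm (pgl_orbit H p)
    (X \<otimes>\<^bsub>PGL3\<^esub> Y \<otimes>\<^bsub>PGL3\<^esub> inv\<^bsub>PGL3\<^esub> X \<otimes>\<^bsub>PGL3\<^esub> inv\<^bsub>PGL3\<^esub> Y))"
proof -
  let ?\<sigma> = "orbit_perm (pgl_orbit H p)"
  have perm: "permutation (?\<sigma> X)" "permutation (?\<sigma> Y)"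
    using orbit_perm_permutes assms permutes_imp_permutation by blast+
  have "?\<sigma> (X \<otimes>\<^bsub>PGL3\<^esub> Y \<otimes>\<^bsub>PGL3\<^esub> inv\<^bsub>PGL3\<^esub> X \<otimes>\<^bsub>PGL3\<^esub> inv\<^bsub>PGL3\<^esub> Y)
      = ?\<sigma> X \<circ> ?\<sigma> Y \<circ> inv' (?\<sigma> X) \<circ> inv' (?\<sigma> Y)"
    using assms subgroup.m_inv_closed[OF subgroup_H] subgroup.m_closed[OF subgroup_H]
    by (simp add: orbit_perm_mult orbit_perm_inv)
  then show ?thesis
    using perm by (auto simp: evenperm_comp evenperm_inv permutation_compose permutation_inverse)
qed

lemma commutator_involution_fixes_orbit:
  assumes "p \<in> P2" "card (pgl_orbit H p) = 3" "X \<in> H" "Y \<in> H"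
    and Z: "Z = X \<otimes>\<^bsub>PGL3\<^esub> Y \<otimes>\<^bsub>PGL3\<^esub> inv\<^bsub>PGL3\<^esub> X \<otimes>\<^bsub>PGL3\<^esub> inv\<^bsub>PGL3\<^esub> Y"
    and "Z \<otimes>\<^bsub>PGL3\<^esub> Z = \<one>\<^bsub>PGL3\<^esub>" and "q \<in> pgl_orbit H p"
  shows "pgl_act Z q = q"
proof -
  let ?\<sigma> = "orbit_perm (pgl_orbit H p)"
  have fin: "finite (pgl_orbit H p)" using assms(2) by (metis card.infinite zero_neq_numeral)
  have "Z \<in> H"
    unfolding Z
    by (intro subgroup.m_closed[OF subgroup_H] subgroup.m_inv_closed[OF subgroup_H] assms(3,4))
  have "?\<sigma> Z \<circ> ?\<sigma> Z = id"
    using orbit_perm_mult[OF assms(1) \<open>Z \<in> H\<close> \<open>Z \<in> H\<close>] assms(6) orbit_perm_one[OF assms(1)]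
    by simp
  moreover have "evenperm (?\<sigma> Z)"
    unfolding Z by (rule evenperm_orbit_perm_commutator[OF assms(1) fin assms(3,4)])
  ultimately have "?\<sigma> Z = id"
    using even_involution_eq_id[OF fin _ orbit_perm_permutes[OF assms(1) \<open>Z \<in> H\<close>]] assms(2)
    by simp
  then have "?\<sigma> Z q = q" by simp
  then show ?thesis using assms(7) by (simp add: orbit_perm_def)
qed

end

section \<open>The Klein four-group inside A4\<close>

lemma transpositions_in_alt_group:
  assumes "a \<in> {1..n}" "b \<in> {1..n}" "c \<in> {1..n}" "d \<in> {1..n}" "a \<noteq> b" "c \<noteq> d"
  shows "Transposition.transpose a b \<circ> Transposition.transpose c d \<in> carrier (alt_group n)"
  using assms
  by (simp add: alt_group_carrier permutes_compose permutes_swap_id evenperm_comp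
      permutation_swap_id evenperm_swap)

lemma fun_eq_on_1_to_4:
  fixes f g :: "nat \<Rightarrow> nat"
  assumes "\<And>x. x \<notin> {1, 2, 3, 4} \<Longrightarrow> f x = g x" "f 1 = g 1" "f 2 = g 2" "f 3 = g 3" "f 4 = g 4"
  shows "f = g"
proof
  fix x show "f x = g x" using assms by (cases "x \<in> {1, 2, 3, 4}") auto
qed

lemma alt_group_comp_closed:
  "x \<in> carrier (alt_group n) \<Longrightarrow> y \<in> carrier (alt_group n) \<Longrightarrow> x \<circ> y \<in> carrier (alt_group n)"
  using monoid.m_closed[OF group.is_monoid[OF alt_group_is_group]] by (simp add: alt_group_mult)

definition klein_a :: "nat \<Rightarrow> nat"
  where "klein_a = Transposition.transpose 1 2 \<circ> Transposition.transpose 3 4"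

definition klein_b :: "nat \<Rightarrow> nat"
  where "klein_b = Transposition.transpose 1 3 \<circ> Transposition.transpose 2 4"

definition three_cycle :: "nat \<Rightarrow> nat"
  where "three_cycle = Transposition.transpose 1 3 \<circ> Transposition.transpose 1 2"

lemma klein_in_alt_group:
  "klein_a \<in> carrier (alt_group 4)" "klein_b \<in> carrier (alt_group 4)"
  "three_cycle \<in> carrier (alt_group 4)"
  unfolding klein_a_def klein_b_def three_cycle_def
  by (auto intro!: transpositions_in_alt_group)

lemma klein_relations:
  "klein_a \<circ> klein_a = id" "klein_b \<circ> klein_b = id" "(klein_a \<circ> klein_b) \<circ> (klein_a \<circ> klein_b) = id"
  unfolding klein_a_def klein_b_def
  by (rule fun_eq_on_1_to_4; simp add: Transposition.transpose_def)+

lemma klein_ne_id: "klein_a \<noteq> id" "klein_b \<noteq> id" "klein_a \<circ> klein_b \<noteq> id"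
proof -
  have "klein_a 1 \<noteq> id 1" "klein_b 1 \<noteq> id 1" "(klein_a \<circ> klein_b) 1 \<noteq> id 1"
    unfolding klein_a_def klein_b_def by (simp_all add: Transposition.transpose_def)
  then show "klein_a \<noteq> id" "klein_b \<noteq> id" "klein_a \<circ> klein_b \<noteq> id" by metis+
qed

lemma klein_commutators:
  "klein_a = three_cycle \<circ> (klein_a \<circ> klein_b) \<circ> inv' three_cycle \<circ> inv' (klein_a \<circ> klein_b)"
  "klein_b = three_cycle \<circ> klein_a \<circ> inv' three_cycle \<circ> inv' klein_a"
proof -
  have "inv' three_cycle = three_cycle \<circ> three_cycle"
    unfolding three_cycle_def
    by (rule inv_unique_comp; rule fun_eq_on_1_to_4; simp add: Transposition.transpose_def)
  moreover have "inv' klein_a = klein_a" "inv' (klein_a \<circ> klein_b) = klein_a \<circ> klein_b"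
    using klein_relations(1,3) by (auto intro: inv_unique_comp)
  moreover have
    "klein_a = three_cycle \<circ> (klein_a \<circ> klein_b) \<circ> (three_cycle \<circ> three_cycle) \<circ> (klein_a \<circ> klein_b)"
    "klein_b = three_cycle \<circ> klein_a \<circ> (three_cycle \<circ> three_cycle) \<circ> klein_a"
    unfolding klein_a_def klein_b_def three_cycle_def
    by (rule fun_eq_on_1_to_4; simp add: Transposition.transpose_def)+
  ultimately show
    "klein_a = three_cycle \<circ> (klein_a \<circ> klein_b) \<circ> inv' three_cycle \<circ> inv' (klein_a \<circ> klein_b)"
    "klein_b = three_cycle \<circ> klein_a \<circ> inv' three_cycle \<circ> inv' klein_a"
    by simp_all
qed

lemma hom_to_subgroup_commutator:
  assumes "group K" "subgroup H K" "group G" "\<psi> \<in> hom G (K\<lparr>carrier := H\<rparr>)"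
    and "x \<in> carrier G" "y \<in> carrier G"
  shows "\<psi> (x \<otimes>\<^bsub>G\<^esub> y \<otimes>\<^bsub>G\<^esub> inv\<^bsub>G\<^esub> x \<otimes>\<^bsub>G\<^esub> inv\<^bsub>G\<^esub> y)
    = \<psi> x \<otimes>\<^bsub>K\<^esub> \<psi> y \<otimes>\<^bsub>K\<^esub> inv\<^bsub>K\<^esub> \<psi> x \<otimes>\<^bsub>K\<^esub> inv\<^bsub>K\<^esub> \<psi> y"
proof -
  interpret group_hom G "K\<lparr>carrier := H\<rparr>" \<psi>
    using assms(1-4) subgroup.subgroup_is_group
    by (simp add: group_hom_def group_hom_axioms_def)
  have "\<psi> x \<in> H" "\<psi> y \<in> H" using assms(5,6) hom_closed by auto
  then show ?thesis
    using assms(5,6) group.m_inv_consistent[OF assms(1,2)] by simp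
qed

context
  fixes H and \<psi> :: "(nat \<Rightarrow> nat) \<Rightarrow> (complex^3^3) set"
  assumes subgroup_H: "subgroup H PGL3"
    and hom_\<psi>: "\<psi> \<in> hom (alt_group 4) (PGL3\<lparr>carrier := H\<rparr>)"
    and inj_\<psi>: "inj_on \<psi> (carrier (alt_group 4))"
begin

lemma embedding_mult:
  "x \<in> carrier (alt_group 4) \<Longrightarrow> y \<in> carrier (alt_group 4) \<Longrightarrow> \<psi> (x \<circ> y) = \<psi> x \<otimes>\<^bsub>PGL3\<^esub> \<psi> y"
  using hom_mult[OF hom_\<psi>] by (simp add: alt_group_mult)

lemma embedding_in_carrier: "x \<in> carrier (alt_group 4) \<Longrightarrow> \<psi> x \<in> carrier PGL3"
  using hom_in_carrier[OF hom_\<psi>] subgroup.mem_carrier[OF subgroup_H] by simp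

lemma embedding_id: "\<psi> id = \<one>\<^bsub>PGL3\<^esub>"
  using hom_one[OF hom_\<psi> alt_group_is_group subgroup.subgroup_is_group[OF subgroup_H group_PGL3]]
  by (simp add: alt_group_one)

lemma embedding_eq_one_iff: "x \<in> carrier (alt_group 4) \<Longrightarrow> \<psi> x = \<one>\<^bsub>PGL3\<^esub> \<longleftrightarrow> x = id"
  using inj_on_eq_iff[OF inj_\<psi> _ monoid.one_closed[OF group.is_monoid[OF alt_group_is_group]]]
    embedding_id
  by (simp add: alt_group_one)

lemma embedding_klein_four_generators: "klein_four_generators (\<psi> klein_a) (\<psi> klein_b)"
  using klein_in_alt_group alt_group_comp_closed[OF klein_in_alt_group(1,2)]
    klein_relations klein_ne_id embedding_id embedding_in_carrier
  unfolding klein_four_generators_def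
  by (simp flip: embedding_mult add: embedding_eq_one_iff)

lemma embedding_klein_fixes_orbit:
  assumes "k \<in> {klein_a, klein_b}" "p \<in> P2" "card (pgl_orbit H p) = 3" "r \<in> pgl_orbit H p"
  shows "pgl_act (\<psi> k) r = r"
proof -
  obtain x y where x: "x \<in> carrier (alt_group 4)" and y: "y \<in> carrier (alt_group 4)"
    and k: "k = x \<circ> y \<circ> inv' x \<circ> inv' y"
    using klein_in_alt_group alt_group_comp_closed[OF klein_in_alt_group(1,2)] klein_commutators
      assms(1)
    by blast
  have "\<psi> k = \<psi> x \<otimes>\<^bsub>PGL3\<^esub> \<psi> y \<otimes>\<^bsub>PGL3\<^esub> inv\<^bsub>PGL3\<^esub> \<psi> x \<otimes>\<^bsub>PGL3\<^esub> inv\<^bsub>PGL3\<^esub> \<psi> y"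
    using hom_to_subgroup_commutator[OF group_PGL3 subgroup_H alt_group_is_group hom_\<psi> x y] x y
    by (simp add: k alt_group_mult alt_group_inv_equality)
  moreover have "\<psi> x \<in> H" "\<psi> y \<in> H"
    using hom_in_carrier[OF hom_\<psi>] x y by auto
  moreover have "\<psi> k \<otimes>\<^bsub>PGL3\<^esub> \<psi> k = \<one>\<^bsub>PGL3\<^esub>"
    using assms(1) embedding_klein_four_generators by (auto simp: klein_four_generators_def)
  ultimately show ?thesis
    using commutator_involution_fixes_orbit[OF subgroup_H assms(2,3)] assms(4) by blast
qed

lemma at_most_one_pgl_orbit_of_length_3:
  assumes "p \<in> P2" "q \<in> P2" "card (pgl_orbit H p) = 3" "card (pgl_orbit H q) = 3"
  shows "pgl_orbit H p = pgl_orbit H q"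
proof (rule ccontr)
  assume "pgl_orbit H p \<noteq> pgl_orbit H q"
  define S where "S = pgl_orbit H p \<union> pgl_orbit H q"
  have "finite (pgl_orbit H p)" "finite (pgl_orbit H q)"
    using assms(3,4) by (metis card.infinite zero_neq_numeral)+
  then have "card S = 6"
    using pgl_orbits_disjoint[OF subgroup_H assms(1,2) \<open>pgl_orbit H p \<noteq> pgl_orbit H q\<close>] assms(3,4)
    unfolding S_def by (simp add: card_Un_disjoint)
  moreover have "S \<subseteq> P2"
    unfolding S_def using pgl_orbit_subset_P2[OF subgroup_H] assms(1,2) by blast
  then have "card S \<le> 4"
  proof (rule card_fixed_points_klein_four_le_4[OF embedding_klein_four_generators])
    fix r assume "r \<in> S"
    then obtain p' where "p' \<in> {p, q}" "r \<in> pgl_orbit H p'" unfolding S_def by blast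
    moreover have "p' \<in> P2" "card (pgl_orbit H p') = 3" using \<open>p' \<in> {p, q}\<close> assms by auto
    ultimately show "pgl_act (\<psi> klein_a) r = r \<and> pgl_act (\<psi> klein_b) r = r"
      using embedding_klein_fixes_orbit[of klein_a p' r] embedding_klein_fixes_orbit[of klein_b p' r]
      by simp
  qed
  ultimately show False by simp
qed

end

lemma alt_group_4_embedding:
  assumes "subgroup H PGL3"
    and "PGL3\<lparr>carrier := H\<rparr> \<cong> sym_group 4 \<or> PGL3\<lparr>carrier := H\<rparr> \<cong> alt_group 4"
  obtains \<psi> where "\<psi> \<in> hom (alt_group 4) (PGL3\<lparr>carrier := H\<rparr>)" "inj_on \<psi> (carrier (alt_group 4))"
proof -
  have "group (PGL3\<lparr>carrier := H\<rparr>)"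
    by (rule subgroup.subgroup_is_group[OF assms(1) group_PGL3])
  then consider "sym_group 4 \<cong> PGL3\<lparr>carrier := H\<rparr>" | "alt_group 4 \<cong> PGL3\<lparr>carrier := H\<rparr>"
    using assms(2) group.iso_sym by blast
  then show thesis
  proof cases
    case 1
    then obtain \<psi> where \<psi>: "\<psi> \<in> hom (sym_group 4) (PGL3\<lparr>carrier := H\<rparr>)"
      "inj_on \<psi> (carrier (sym_group 4))"
      unfolding is_iso_def iso_def bij_betw_def by blast
    have sub: "carrier (alt_group 4) \<subseteq> carrier (sym_group 4)"
      by (rule subgroup.subset[OF alt_group_is_subgroup])
    have "\<psi> \<in> hom (alt_group 4) (PGL3\<lparr>carrier := H\<rparr>)"
    proof (rule homI)
      fix x y assume "x \<in> carrier (alt_group 4)" "y \<in> carrier (alt_group 4)"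
      then show "\<psi> x \<in> carrier (PGL3\<lparr>carrier := H\<rparr>)"
        and "\<psi> (x \<otimes>\<^bsub>alt_group 4\<^esub> y) = \<psi> x \<otimes>\<^bsub>PGL3\<lparr>carrier := H\<rparr>\<^esub> \<psi> y"
        using hom_in_carrier[OF \<psi>(1)] hom_mult[OF \<psi>(1)] sub
        by (auto simp: alt_group_mult sym_group_mult)
    qed
    then show thesis using that \<psi>(2) sub inj_on_subset by blast
  next
    case 2
    then show thesis
      unfolding is_iso_def iso_def bij_betw_def using that by blast
  qed
qed

theorem lemma4p2:
  fixes H :: "(complex^3^3) set set"
  assumes "subgroup H PGL3"
    and "finite H"
    and "PGL3\<lparr>carrier := H\<rparr> \<cong> sym_group 4 \<or> PGL3\<lparr>carrier := H\<rparr> \<cong> alt_group 4"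
  shows "(\<exists>p\<in>P2. \<forall>X\<in>H. pgl_act X p = p)
    \<or> (\<forall>p\<in>P2. \<forall>q\<in>P2. card (pgl_orbit H p) = 3 \<and> card (pgl_orbit H q) = 3
          \<longrightarrow> pgl_orbit H p = pgl_orbit H q)"
proof -
  obtain \<psi> where \<psi>: "\<psi> \<in> hom (alt_group 4) (PGL3\<lparr>carrier := H\<rparr>)" "inj_on \<psi> (carrier (alt_group 4))"
    using alt_group_4_embedding[OF assms(1,3)] by blast
  have "pgl_orbit H p = pgl_orbit H q"
    if "p \<in> P2" "q \<in> P2" "card (pgl_orbit H p) = 3 \<and> card (pgl_orbit H q) = 3" for p q
    using at_most_one_pgl_orbit_of_length_3[OF assms(1) \<psi>] that by blast
  then show ?thesis by blast
qed

end
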